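(* Consider the following process on a finite vertex set $V=\{1,\dots,p\}$. One maintains an ordered list of vertex subsets ("cliques") $[C_1,\dots,C_m]$ and a set of outstanding vertices $O=V\setminus\bigcup_i C_i$; the associated graph $G$ on $V$ has an edge between two distinct vertices iff they lie in a common $C_i$. Initially the list is some list $C_I=[C_1,\dots,C_m]$ of nonempty subsets that is a perfect sequence of sets in the graph it induces (for instance a single nonempty subset). While $O\neq\emptyset$, a step chooses a clique $C_a$ in the list, a vertex $v\in O$ and a subset $S\subseteq C_a$, and then: if $S$ is a nonempty proper subset of $C_a$, the clique $S\cup\{v\}$ is appended at the end of the list; if $S=C_a$, the entry $C_a$ is replaced in place by $C_a\cup\{v\}$; if $S=\emptyset$, the clique $\{v\}$ is appended at the end of the list; finally $v$ is removed from $O$. (In the MFCF algorithm the triple $(C_a,v,S)$ is chosen by maximising a gain function, but the claim concerns any such choices.) Then at every stage, and in particular at termination, the ordered list of cliques is a perfect sequence of sets.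
   Context: An ordering $[C_1,\dots,C_m]$ of subsets has the running intersection property if for every $i$ with $2\le i\le m$ there is $j<i$ with $C_i\cap(C_1\cup\dots\cup C_{i-1})\subseteq C_j$; the sets $S_i=C_i\cap(C_1\cup\dots\cup C_{i-1})$ are the separators. The ordering is a perfect sequence of sets (perfect order) if it has the running intersection property and every separator $S_i$ is complete (all pairs of its vertices are adjacent) in the graph $G$. *)

theory Defs
  imports Main
begin

definition clique_graph :: "'a set list \<Rightarrow> 'a \<Rightarrow> 'a \<Rightarrow> bool" where
  "clique_graph Cs x y \<longleftrightarrow> x \<noteq> y \<and> (\<exists>C \<in> set Cs. x \<in> C \<and> y \<in> C)"

text \<open>Separator S_i = C_i \<inter> (C_1 \<union> ... \<union> C_{i-1}) (0-based index i).\<close>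
definition separator :: "'a set list \<Rightarrow> nat \<Rightarrow> 'a set" where
  "separator Cs i = Cs ! i \<inter> \<Union> (set (take i Cs))"

definition running_intersection :: "'a set list \<Rightarrow> bool" where
  "running_intersection Cs \<longleftrightarrow>
     (\<forall>i. 1 \<le> i \<and> i < length Cs \<longrightarrow> (\<exists>j < i. separator Cs i \<subseteq> Cs ! j))"

definition complete_in :: "('a \<Rightarrow> 'a \<Rightarrow> bool) \<Rightarrow> 'a set \<Rightarrow> bool" where
  "complete_in G S \<longleftrightarrow> (\<forall>x \<in> S. \<forall>y \<in> S. x \<noteq> y \<longrightarrow> G x y)"

definition perfect_sequence :: "('a \<Rightarrow> 'a \<Rightarrow> bool) \<Rightarrow> 'a set list \<Rightarrow> bool" where
  "perfect_sequence G Cs \<longleftrightarrow> running_intersection Cs \<and>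
     (\<forall>i. 1 \<le> i \<and> i < length Cs \<longrightarrow> complete_in G (separator Cs i))"

inductive mfcf_reach :: "nat \<Rightarrow> nat set list \<Rightarrow> nat set \<Rightarrow> bool" for p :: nat where
  init: "\<lbrakk> Cs \<noteq> []; \<forall>C \<in> set Cs. C \<noteq> {} \<and> C \<subseteq> {1..p};
          perfect_sequence (clique_graph Cs) Cs \<rbrakk>
        \<Longrightarrow> mfcf_reach p Cs ({1..p} - \<Union> (set Cs))"
| step_proper: "\<lbrakk> mfcf_reach p Cs Out; Out \<noteq> {}; a < length Cs; v \<in> Out;
          S \<subseteq> Cs ! a; S \<noteq> {}; S \<noteq> Cs ! a \<rbrakk>
        \<Longrightarrow> mfcf_reach p (Cs @ [insert v S]) (Out - {v})"
| step_full: "\<lbrakk> mfcf_reach p Cs Out; Out \<noteq> {}; a < length Cs; v \<in> Out \<rbrakk>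
        \<Longrightarrow> mfcf_reach p (Cs[a := insert v (Cs ! a)]) (Out - {v})"
| step_empty: "\<lbrakk> mfcf_reach p Cs Out; Out \<noteq> {}; a < length Cs; v \<in> Out \<rbrakk>
        \<Longrightarrow> mfcf_reach p (Cs @ [{v}]) (Out - {v})"

end

theory Submission
  imports Defs
begin

text \<open>Every separator lies in an earlier clique of the list, so it is automatically complete
in the graph the list induces: a list of cliques is a perfect sequence in its own graph iff it
has the running intersection property. The latter survives each step of the process because
the new vertex \<open>v\<close> is outstanding and so lies in no clique yet. An appended clique
\<open>S \<union> {v}\<close> or \<open>{v}\<close> therefore meets the earlier cliques only in \<open>S \<subseteq> C\<^sub>a\<close> or \<open>{}\<close>, and
replacing \<open>C\<^sub>a\<close> by \<open>C\<^sub>a \<union> {v}\<close> changes no separator while only enlarging cliques.\<close>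

lemma complete_in_clique_graph_subset:
  assumes "C \<in> set Cs" "S \<subseteq> C"
  shows "complete_in (clique_graph Cs) S"
  using assms unfolding complete_in_def clique_graph_def by blast

lemma separator_subset_nth_complete:
  assumes "j < length Cs" "separator Cs i \<subseteq> Cs ! j"
  shows "complete_in (clique_graph Cs) (separator Cs i)"
  using assms by (blast intro: complete_in_clique_graph_subset nth_mem)

lemma perfect_sequence_clique_graph_iff:
  "perfect_sequence (clique_graph Cs) Cs \<longleftrightarrow> running_intersection Cs"
  unfolding perfect_sequence_def running_intersection_def
  by (meson order.strict_trans separator_subset_nth_complete)

lemma separator_append:
  "i < length Cs \<Longrightarrow> separator (Cs @ [X]) i = separator Cs i"
  by (simp add: separator_def nth_append)

lemma separator_append_length:
  "separator (Cs @ [X]) (length Cs) = X \<inter> \<Union> (set Cs)"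
  by (simp add: separator_def)

lemma running_intersection_append:
  assumes "running_intersection Cs" "a < length Cs" "X \<inter> \<Union> (set Cs) \<subseteq> Cs ! a"
  shows "running_intersection (Cs @ [X])"
  unfolding running_intersection_def
proof (intro allI impI)
  fix i assume i: "1 \<le> i \<and> i < length (Cs @ [X])"
  show "\<exists>j<i. separator (Cs @ [X]) i \<subseteq> (Cs @ [X]) ! j"
  proof (cases "i = length Cs")
    case True
    then show ?thesis
      using assms(2,3) by (intro exI[of _ a]) (simp add: separator_append_length nth_append)
  next
    case False
    with i have "i < length Cs" by simp
    with i assms(1) obtain j where "j < i" "separator Cs i \<subseteq> Cs ! j"
      unfolding running_intersection_def by blast
    with \<open>i < length Cs\<close> show ?thesis
      by (intro exI[of _ j]) (simp add: separator_append nth_append)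
  qed
qed

lemma Union_set_update_insert_nth:
  assumes "a < length Cs"
  shows "\<Union> (set (Cs[a := insert v (Cs ! a)])) = insert v (\<Union> (set Cs))"
proof -
  have "\<Union> (set Cs) = \<Union> (set (take a Cs)) \<union> Cs ! a \<union> \<Union> (set (drop (Suc a) Cs))"
    using id_take_nth_drop[OF assms]
    by (metis Union_insert Union_Un_distrib list.simps(15) set_append sup_assoc)
  then show ?thesis
    using assms by (simp add: upd_conv_take_nth_drop) blast
qed

lemma separator_update_insert_fresh:
  assumes fresh: "v \<notin> \<Union> (set Cs)" and "a < length Cs" "i < length Cs"
  shows "separator (Cs[a := insert v (Cs ! a)]) i = separator Cs i"
proof -
  have "v \<notin> Cs ! i" and fresh_prefix: "v \<notin> \<Union> (set (take i Cs))"
    using fresh \<open>i < length Cs\<close> by (auto dest: nth_mem in_set_takeD)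
  consider "i \<le> a" | "a < i" by linarith
  then show ?thesis
  proof cases
    case 1
    then have "take i (Cs[a := insert v (Cs ! a)]) = take i Cs"
      by (simp add: take_update_cancel)
    moreover have "Cs[a := insert v (Cs ! a)] ! i \<inter> \<Union> (set (take i Cs))
        = Cs ! i \<inter> \<Union> (set (take i Cs))"
      using fresh_prefix \<open>i < length Cs\<close> by (cases "i = a") auto
    ultimately show ?thesis
      by (simp add: separator_def)
  next
    case 2
    with \<open>i < length Cs\<close>
    have "\<Union> (set (take i (Cs[a := insert v (Cs ! a)]))) = insert v (\<Union> (set (take i Cs)))"
      using Union_set_update_insert_nth[of a "take i Cs" v] by (simp add: take_update_swap)
    with 2 \<open>v \<notin> Cs ! i\<close> show ?thesis
      by (auto simp: separator_def)
  qed
qed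

lemma running_intersection_update_insert_fresh:
  assumes "running_intersection Cs" "v \<notin> \<Union> (set Cs)" "a < length Cs"
  shows "running_intersection (Cs[a := insert v (Cs ! a)])"
  unfolding running_intersection_def
proof (intro allI impI)
  fix i assume i: "1 \<le> i \<and> i < length (Cs[a := insert v (Cs ! a)])"
  with assms(1) obtain j where "j < i" "separator Cs i \<subseteq> Cs ! j"
    unfolding running_intersection_def by auto
  moreover have "Cs ! j \<subseteq> Cs[a := insert v (Cs ! a)] ! j"
    using \<open>j < i\<close> i by (cases "j = a") auto
  ultimately show
    "\<exists>j<i. separator (Cs[a := insert v (Cs ! a)]) i \<subseteq> Cs[a := insert v (Cs ! a)] ! j"
    using i assms(2,3) by (auto simp: separator_update_insert_fresh)
qed

lemma mfcf_reach_outstanding_fresh: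
  "mfcf_reach p Cs Out \<Longrightarrow> Out \<inter> \<Union> (set Cs) = {}"
  by (induction rule: mfcf_reach.induct) (auto simp: Union_set_update_insert_nth dest: nth_mem)

theorem theorem13:
  fixes p :: nat and Cs :: "nat set list" and Out :: "nat set"
  assumes "mfcf_reach p Cs Out"
  shows "perfect_sequence (clique_graph Cs) Cs"
  unfolding perfect_sequence_clique_graph_iff
  using assms
proof induction
  case (init Cs)
  then show ?case by (simp add: perfect_sequence_clique_graph_iff)
next
  case (step_proper Cs Out a v S)
  then have "v \<notin> \<Union> (set Cs)" using mfcf_reach_outstanding_fresh by blast
  with step_proper show ?case by (blast intro: running_intersection_append)
next
  case (step_full Cs Out a v)
  then have "v \<notin> \<Union> (set Cs)" using mfcf_reach_outstanding_fresh by blast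
  with step_full show ?case by (blast intro: running_intersection_update_insert_fresh)
next
  case (step_empty Cs Out a v)
  then have "v \<notin> \<Union> (set Cs)" using mfcf_reach_outstanding_fresh by blast
  with step_empty show ?case by (blast intro: running_intersection_append)
qed

end
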